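(* Let $W=e^{-Q}\in\mathcal F(C^2)$ and let $\{p_m\}$ be the orthonormal polynomials with respect to $W^2(x)dx$. Then there are real numbers $A_m>0$, $B_m$ ($m\ge0$, with $A_{-1}p_{-1}:=0$) such that $xp_m(x)=A_mp_{m+1}(x)+B_mp_m(x)+A_{m-1}p_{m-1}(x)$ for all $m\ge0$, and there exist $r\in(0,1)$ and $C_1,C_2>0$ such that for all $m\ge1$: $C_1\le A_m\le C_2m^r$ and $|B_m|\le C_2m^r$.
   Context: Weight class $\mathcal F(C^2)$: $W=e^{-Q}$ where $Q:\mathbb R\to[0,\infty)$ satisfies: $Q'$ continuous and $Q(0)=0$; $Q'$ non-decreasing and $Q''$ exists on $\mathbb R\setminus\{0\}$; $Q(t)\to\infty$ as $|t|\to\infty$; $T(t)=tQ'(t)/Q(t)$ is quasi-increasing on $(0,\infty)$ (i.e. $T(x)\le C_1'T(y)$ for $0<x<y$) and analogously for $y<x<0$, with $T\ge\Lambda>1$ on $\mathbb R\setminus\{0\}$; and $Q''(x)/|Q'(x)|\le C_2'|Q'(x)|/Q(x)$ for $x\ne0$. Orthonormal polynomials have positive leading coefficients. *)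

theory Defs
  imports "HOL-Analysis.Analysis" "HOL-Computational_Algebra.Polynomial"
begin

definition T_fun :: "(real \<Rightarrow> real) \<Rightarrow> real \<Rightarrow> real" where
  "T_fun Q t = t * deriv Q t / Q t"

text \<open>W = exp(-Q) belongs to the class F(C^2) (stated as a condition on Q).\<close>
definition class_FC2 :: "(real \<Rightarrow> real) \<Rightarrow> bool" where
  "class_FC2 Q \<longleftrightarrow>
     (\<forall>x. 0 \<le> Q x) \<and> Q 0 = 0 \<and>
     (\<forall>x. Q differentiable (at x)) \<and> continuous_on UNIV (deriv Q) \<and>
     mono (deriv Q) \<and>
     (\<forall>x. x \<noteq> 0 \<longrightarrow> deriv Q differentiable (at x)) \<and>
     filterlim Q at_top at_infinity \<and>
     (\<exists>C1'. (\<forall>x y. 0 < x \<and> x < y \<longrightarrow> T_fun Q x \<le> C1' * T_fun Q y) \<and>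
            (\<forall>x y. y < x \<and> x < 0 \<longrightarrow> T_fun Q x \<le> C1' * T_fun Q y)) \<and>
     (\<exists>\<Lambda>>1. \<forall>t. t \<noteq> 0 \<longrightarrow> \<Lambda> \<le> T_fun Q t) \<and>
     (\<exists>C2'. \<forall>x. x \<noteq> 0 \<longrightarrow>
        deriv (deriv Q) x / \<bar>deriv Q x\<bar> \<le> C2' * \<bar>deriv Q x\<bar> / Q x)"

definition orthonormal_polys :: "(real \<Rightarrow> real) \<Rightarrow> (nat \<Rightarrow> real poly) \<Rightarrow> bool" where
  "orthonormal_polys Q p \<longleftrightarrow>
     (\<forall>m. degree (p m) = m \<and> lead_coeff (p m) > 0) \<and>
     (\<forall>m n. integrable lborel (\<lambda>x. poly (p m) x * poly (p n) x * (exp (- Q x))\<^sup>2) \<and>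
            (LINT x|lborel. poly (p m) x * poly (p n) x * (exp (- Q x))\<^sup>2)
              = (if m = n then 1 else 0))"

end

theory Submission imports Defs begin

text \<open>
  The recurrence holds for every orthonormal polynomial system: expanding \<open>x p\<^sub>m\<close> in the basis
  \<open>p\<^sub>0, \<dots>, p\<^sub>m\<^sub>+\<^sub>1\<close>, orthogonality kills all but three coefficients, and
  \<open>A\<^sub>m = \<gamma>\<^sub>m / \<gamma>\<^sub>m\<^sub>+\<^sub>1\<close> is the ratio of leading coefficients, \<open>B\<^sub>m = \<integral> x p\<^sub>m\<^sup>2 W\<^sup>2\<close>.

  For the bounds, integration by parts against \<open>W\<^sup>2 = e\<^sup>-\<^sup>2\<^sup>Q\<close> gives the Freud identities
  \<open>\<integral> Q' p\<^sub>m\<^sub>+\<^sub>1 p\<^sub>m W\<^sup>2 = (m+1)/(2A\<^sub>m)\<close> and \<open>\<integral> x Q' p\<^sub>m\<^sup>2 W\<^sup>2 = m + 1/2\<close>.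
  As \<open>|Q'| \<le> K + x Q'\<close>, the first identity and \<open>2|ab| \<le> a\<^sup>2 + b\<^sup>2\<close> give
  \<open>(m+1)/(2A\<^sub>m) \<le> K + m + 1\<close>, a lower bound for \<open>A\<^sub>m\<close>. Both \<open>A\<^sub>m\<close> and \<open>|B\<^sub>m|\<close> are bounded by
  absolute moments \<open>\<integral> |x| p\<^sub>m\<^sup>2 W\<^sup>2\<close>; splitting \<open>|x| \<le> m\<^sup>r + |x|\<^sup>\<Lambda> m\<^sup>r\<^sup>-\<^sup>1\<close> with
  \<open>r = 1/\<Lambda>\<close> and using \<open>|x|\<^sup>\<Lambda> \<lesssim> 1 + x Q'(x)\<close> (from \<open>Q(x) \<gtrsim> |x|\<^sup>\<Lambda>\<close> and \<open>x Q' \<ge> \<Lambda> Q\<close>)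
  bounds these moments by a multiple of \<open>m\<^sup>r\<close>.
\<close>

section \<open>Orthonormal polynomials and the three-term recurrence\<close>

lemma abs_integral_le_half_sq_sum:
  fixes f g h k :: "real \<Rightarrow> real"
  assumes "integrable M h"
    and "integrable M (\<lambda>x. (f x)\<^sup>2 * k x)" "integrable M (\<lambda>x. (g x)\<^sup>2 * k x)"
    and k: "\<And>x. 0 \<le> k x" and h: "\<And>x. \<bar>h x\<bar> \<le> \<bar>f x * g x\<bar> * k x"
  shows "\<bar>LINT x|M. h x\<bar> \<le> ((LINT x|M. (f x)\<^sup>2 * k x) + (LINT x|M. (g x)\<^sup>2 * k x)) / 2"
proof -
  have "\<bar>LINT x|M. h x\<bar> \<le> (LINT x|M. ((f x)\<^sup>2 * k x + (g x)\<^sup>2 * k x) / 2)"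
  proof (rule integral_abs_bound_integral)
    fix x
    have "2 * \<bar>f x\<bar> * \<bar>g x\<bar> \<le> (f x)\<^sup>2 + (g x)\<^sup>2"
      using sum_squares_bound[of "\<bar>f x\<bar>" "\<bar>g x\<bar>"] by simp
    then have "\<bar>f x * g x\<bar> * k x \<le> ((f x)\<^sup>2 + (g x)\<^sup>2) / 2 * k x"
      by (intro mult_right_mono k) (simp add: abs_mult)
    then show "\<bar>h x\<bar> \<le> ((f x)\<^sup>2 * k x + (g x)\<^sup>2 * k x) / 2"
      using h[of x] by (simp add: algebra_simps)
  qed (use assms in auto)
  also have "\<dots> = ((LINT x|M. (f x)\<^sup>2 * k x) + (LINT x|M. (g x)\<^sup>2 * k x)) / 2"
    using assms(2,3) by simp
  finally show ?thesis .
qed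

locale orthonormal_system =
  fixes w :: "real \<Rightarrow> real" and p :: "nat \<Rightarrow> real poly"
  assumes weight_nonneg: "\<And>x. 0 \<le> w x"
    and degree_p: "\<And>m. degree (p m) = m"
    and lead_coeff_p_pos: "\<And>m. 0 < lead_coeff (p m)"
    and integrable_p_p: "\<And>m n. integrable lborel (\<lambda>x. poly (p m) x * poly (p n) x * w x)"
    and integral_p_p:
      "\<And>m n. (LINT x|lborel. poly (p m) x * poly (p n) x * w x) = (if m = n then 1 else 0)"
begin

definition wint :: "real poly \<Rightarrow> real" where
  "wint h = (LINT x|lborel. poly h x * w x)"

lemma wint_p_p: "wint (p m * p n) = (if m = n then 1 else 0)"
  using integral_p_p[of m n] by (simp add: wint_def mult.assoc)

lemma lead_coeff_p_nonzero: "lead_coeff (p m) \<noteq> 0"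
  using lead_coeff_p_pos[of m] by (metis less_irrefl)

lemma coeff_p_eq_0: "m < i \<Longrightarrow> coeff (p m) i = 0"
  by (simp add: coeff_eq_0 degree_p)

lemma p_0_eq: "p 0 = [:lead_coeff (p 0):]"
  using degree_p[of 0] degree_0_id[of "p 0"] by simp

lemma in_span_p: "degree q \<le> n \<Longrightarrow> \<exists>c. q = (\<Sum>j\<le>n. smult (c j) (p j))"
proof (induction n arbitrary: q)
  case 0
  then have "q = smult (coeff q 0 / lead_coeff (p 0)) (p 0)"
    using degree_0_id[of q] lead_coeff_p_nonzero[of 0] by (subst p_0_eq) simp
  then show ?case by (intro exI[of _ "\<lambda>_. coeff q 0 / lead_coeff (p 0)"]) simp
next
  case (Suc n)
  define c where "c = coeff q (Suc n) / lead_coeff (p (Suc n))"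
  have "degree (q - smult c (p (Suc n))) \<le> n"
  proof (rule degree_le, intro allI impI)
    fix i assume "n < i"
    then consider "i = Suc n" | "Suc n < i" by linarith
    then show "coeff (q - smult c (p (Suc n))) i = 0"
    proof cases
      case 2
      then show ?thesis using Suc.prems by (simp add: coeff_eq_0 coeff_p_eq_0)
    qed (use lead_coeff_p_nonzero[of "Suc n"] in \<open>simp add: c_def degree_p\<close>)
  qed
  then obtain d where "q - smult c (p (Suc n)) = (\<Sum>j\<le>n. smult (d j) (p j))"
    using Suc.IH by blast
  then have "q = (\<Sum>j\<le>Suc n. smult ((d(Suc n := c)) j) (p j))"
    by (simp add: algebra_simps)
  then show ?case by blast
qed

lemma integrable_poly_weight: "integrable lborel (\<lambda>x. poly h x * w x)"
proof -
  obtain c where c: "h = (\<Sum>j\<le>degree h. smult (c j) (p j))"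
    using in_span_p[of h "degree h"] by blast
  define a where "a = lead_coeff (p 0)"
  have "a \<noteq> 0" using lead_coeff_p_nonzero[of 0] by (simp add: a_def)
  moreover have "poly (p 0) x = a" for x by (subst p_0_eq) (simp add: a_def)
  ultimately have "poly h x * w x = (\<Sum>j\<le>degree h. c j / a * (poly (p j) x * poly (p 0) x * w x))"
    for x by (subst c) (simp add: poly_sum sum_distrib_right mult.assoc)
  moreover have "integrable lborel
      (\<lambda>x. \<Sum>j\<le>degree h. c j / a * (poly (p j) x * poly (p 0) x * w x))"
    by (intro Bochner_Integration.integrable_sum integrable_mult_right integrable_p_p)
  ultimately show ?thesis by simp
qed

lemma wint_add: "wint (f + g) = wint f + wint g"
  by (simp add: wint_def distrib_right integrable_poly_weight)

lemma wint_diff: "wint (f - g) = wint f - wint g"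
  by (simp add: wint_def left_diff_distrib integrable_poly_weight)

lemma wint_smult: "wint (smult c f) = c * wint f"
  by (simp add: wint_def mult.assoc)

lemma wint_sum: "wint (\<Sum>j\<in>J. f j) = (\<Sum>j\<in>J. wint (f j))"
  by (induction J rule: infinite_finite_induct) (simp_all add: wint_add wint_def[of 0])

lemma wint_span_mult_p:
  assumes "q = (\<Sum>j\<le>n. smult (c j) (p j))" "i \<le> n"
  shows "wint (q * p i) = c i"
proof -
  have "wint (q * p i) = (\<Sum>j\<le>n. c j * wint (p j * p i))"
    by (simp add: assms(1) sum_distrib_right wint_sum wint_smult)
  also have "\<dots> = c i"
    using assms(2) by (simp add: wint_p_p if_distrib cong: if_cong)
  finally show ?thesis .
qed

lemma wint_orthogonal:
  assumes "\<And>i. m \<le> i \<Longrightarrow> coeff q i = 0"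
  shows "wint (q * p m) = 0"
proof (cases m)
  case 0
  then have "q = 0" using assms by (simp add: poly_eq_iff)
  then show ?thesis by (simp add: wint_def)
next
  case (Suc k)
  have "degree q \<le> k" using assms Suc by (intro degree_le) auto
  then obtain c where "q = (\<Sum>j\<le>k. smult (c j) (p j))" using in_span_p by blast
  then have "wint (q * p m) = (\<Sum>j\<le>k. c j * wint (p j * p m))"
    by (simp add: sum_distrib_right wint_sum wint_smult)
  also have "\<dots> = 0" using Suc by (intro sum.neutral) (auto simp: wint_p_p)
  finally show ?thesis .
qed

lemma wint_mult_p:
  assumes "degree q \<le> m"
  shows "wint (q * p m) = coeff q m / lead_coeff (p m)"
proof -
  define c where "c = coeff q m / lead_coeff (p m)"
  have "wint ((q - smult c (p m)) * p m) = 0"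
  proof (rule wint_orthogonal)
    fix i assume "m \<le> i"
    then consider "i = m" | "m < i" by linarith
    then show "coeff (q - smult c (p m)) i = 0"
    proof cases
      case 2
      then show ?thesis using assms by (simp add: coeff_eq_0 coeff_p_eq_0)
    qed (use lead_coeff_p_nonzero[of m] in \<open>simp add: c_def degree_p\<close>)
  qed
  then show ?thesis by (simp add: left_diff_distrib wint_diff wint_smult wint_p_p c_def)
qed

definition jacobi_a :: "nat \<Rightarrow> real" where
  "jacobi_a m = lead_coeff (p m) / lead_coeff (p (Suc m))"

definition jacobi_b :: "nat \<Rightarrow> real" where
  "jacobi_b m = wint (pCons 0 (p m) * p m)"

lemma jacobi_a_pos: "0 < jacobi_a m"
  using lead_coeff_p_pos[of m] lead_coeff_p_pos[of "Suc m"] by (simp add: jacobi_a_def)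

lemma wint_x_p_p_Suc: "wint (pCons 0 (p m) * p (Suc m)) = jacobi_a m"
proof -
  have "degree (pCons 0 (p m)) \<le> Suc m"
    using degree_pCons_le[of 0 "p m"] by (simp add: degree_p)
  then show ?thesis by (simp add: wint_mult_p jacobi_a_def degree_p del: mult_pCons_left)
qed

lemma wint_x_p_lower:
  assumes "Suc j < m"
  shows "wint (pCons 0 (p m) * p j) = 0"
proof -
  have "wint (pCons 0 (p m) * p j) = wint (pCons 0 (p j) * p m)"
    by (simp add: algebra_simps)
  also have "\<dots> = 0"
    by (rule wint_orthogonal) (use assms in \<open>auto simp: coeff_pCons coeff_p_eq_0 split: nat.split\<close>)
  finally show ?thesis .
qed

lemma degree_x_p_minus_jacobi_a_le: "degree (pCons 0 (p m) - smult (jacobi_a m) (p (Suc m))) \<le> m"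
proof (rule degree_le, intro allI impI)
  fix i assume "m < i"
  then consider "i = Suc m" | "Suc m < i" by linarith
  then show "coeff (pCons 0 (p m) - smult (jacobi_a m) (p (Suc m))) i = 0"
  proof cases
    case 1
    then show ?thesis
      using lead_coeff_p_nonzero[of "Suc m"] by (simp add: jacobi_a_def degree_p)
  next
    case 2
    then obtain k where "i = Suc k" "m < k" by (cases i) auto
    then show ?thesis by (simp add: coeff_p_eq_0)
  qed
qed

lemma three_term_recurrence:
  "pCons 0 (p m) = smult (jacobi_a m) (p (Suc m)) + smult (jacobi_b m) (p m)
     + (if m = 0 then 0 else smult (jacobi_a (m - 1)) (p (m - 1)))"
proof -
  define r where "r = pCons 0 (p m) - smult (jacobi_a m) (p (Suc m)) - smult (jacobi_b m) (p m)
    - (if m = 0 then 0 else smult (jacobi_a (m - 1)) (p (m - 1)))"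
  have "degree r \<le> m"
    unfolding r_def using degree_smult_le degree_p
    by (intro degree_diff_le degree_x_p_minus_jacobi_a_le) (auto intro: order_trans)
  then obtain c where c: "r = (\<Sum>j\<le>m. smult (c j) (p j))" using in_span_p by blast
  have "c j = 0" if jm: "j \<le> m" for j
  proof -
    have "c j = wint (pCons 0 (p m) * p j) - jacobi_a m * wint (p (Suc m) * p j)
        - jacobi_b m * wint (p m * p j)
        - (if m = 0 then 0 else jacobi_a (m - 1) * wint (p (m - 1) * p j))"
      using wint_span_mult_p[OF c jm]
      by (cases "m = 0") (simp_all add: r_def left_diff_distrib wint_diff wint_smult wint_def[of 0]
          del: mult_pCons_left)
    also have "\<dots> = 0"
    proof -
      consider "j = m" | "Suc j = m" | "Suc j < m" using jm by linarith
      then show ?thesis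
      proof cases
        case 1 then show ?thesis by (cases m) (simp_all add: wint_p_p jacobi_b_def)
      next
        case 2
        have "wint (pCons 0 (p m) * p j) = wint (pCons 0 (p j) * p m)"
          by (simp add: algebra_simps)
        then show ?thesis using 2 wint_x_p_p_Suc[of j] by (auto simp: wint_p_p)
      next
        case 3 then show ?thesis using wint_x_p_lower[of j m] by (auto simp: wint_p_p)
      qed
    qed
    finally show ?thesis .
  qed
  then have "r = 0" using c by simp
  then show ?thesis by (simp add: r_def algebra_simps)
qed

lemma poly_three_term_recurrence:
  "x * poly (p m) x = jacobi_a m * poly (p (Suc m)) x + jacobi_b m * poly (p m) x
     + (if m = 0 then 0 else jacobi_a (m - 1) * poly (p (m - 1)) x)"
  using arg_cong[OF three_term_recurrence[of m], of "\<lambda>q. poly q x"] by (cases m) simp_all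

lemma wint_x_pderiv_p_p: "wint (pCons 0 (pderiv (p m)) * p m) = real m"
proof (cases m)
  case 0
  have "pderiv (p 0) = 0" by (subst p_0_eq) (simp add: pderiv_pCons)
  then show ?thesis using 0 by (simp add: wint_def)
next
  case (Suc k)
  have "degree (pCons 0 (pderiv (p m))) \<le> m"
    using degree_pCons_le[of 0 "pderiv (p m)"] degree_pderiv[of "p m"] Suc by (simp add: degree_p)
  then show ?thesis
    using Suc lead_coeff_p_nonzero[of m]
    by (simp add: wint_mult_p coeff_pderiv degree_p del: mult_pCons_left)
qed

definition abs_moment :: "nat \<Rightarrow> real" where
  "abs_moment m = (LINT x|lborel. (poly (p m) x)\<^sup>2 * (\<bar>x\<bar> * w x))"

lemma integrable_abs_moment: "integrable lborel (\<lambda>x. (poly (p m) x)\<^sup>2 * (\<bar>x\<bar> * w x))"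
proof -
  have "\<bar>poly (pCons 0 (p m * p m)) x * w x\<bar> = (poly (p m) x)\<^sup>2 * (\<bar>x\<bar> * w x)" for x
    using weight_nonneg[of x] by (simp add: abs_mult power2_eq_square mult_ac)
  then show ?thesis
    using integrable_abs[OF integrable_poly_weight[of "pCons 0 (p m * p m)"]] by simp
qed

lemma abs_jacobi_b_le: "\<bar>jacobi_b m\<bar> \<le> abs_moment m"
  using abs_integral_le_half_sq_sum[OF integrable_poly_weight integrable_abs_moment
      integrable_abs_moment, of "pCons 0 (p m) * p m" m m] weight_nonneg
  by (simp add: jacobi_b_def wint_def abs_moment_def abs_mult mult_ac)

lemma jacobi_a_le_abs_moment: "jacobi_a m \<le> (abs_moment m + abs_moment (Suc m)) / 2"
  using abs_integral_le_half_sq_sum[OF integrable_poly_weight integrable_abs_moment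
      integrable_abs_moment, of "pCons 0 (p m) * p (Suc m)" m "Suc m"] weight_nonneg
  by (simp add: wint_x_p_p_Suc[symmetric] wint_def abs_moment_def abs_mult mult_ac)

end

section \<open>Freud exponents\<close>

lemma power_le_exp_scaled:
  fixes a y :: real
  assumes a: "0 < a" and y: "0 \<le> y"
  shows "y ^ n \<le> (real n / a) ^ n * exp (a * y)"
proof (cases "n = 0")
  case False
  have "(a * y / real n) ^ n \<le> (1 + a * y / real n) ^ n"
    using a y by (intro power_mono) auto
  also have "\<dots> \<le> exp (a * y)"
  proof (rule exp_ge_one_plus_x_over_n_power_n)
    show "- real n \<le> a * y" using a y by (smt (verit) mult_nonneg_nonneg of_nat_0_le_iff)
  qed (use False in auto)
  finally have "(real n / a) ^ n * (a * y / real n) ^ n \<le> (real n / a) ^ n * exp (a * y)"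
    using a by (intro mult_left_mono) auto
  also have "(real n / a) ^ n * (a * y / real n) ^ n = y ^ n"
    using a False by (simp add: power_mult_distrib[symmetric])
  finally show ?thesis .
qed (use a y in simp)

text \<open>Comparison with the solution of \<open>t R' = L R\<close>: \<open>R(t) t\<^sup>-\<^sup>L\<close> is non-decreasing.\<close>
lemma powr_le_of_deriv_ge:
  fixes R R' :: "real \<Rightarrow> real"
  assumes deriv: "\<And>t. 0 < t \<Longrightarrow> (R has_real_derivative R' t) (at t)"
    and ge: "\<And>t. 1 \<le> t \<Longrightarrow> L * R t \<le> t * R' t"
    and x: "1 \<le> x"
  shows "R 1 * x powr L \<le> R x"
proof -
  define G where "G t = R t * t powr (- L)" for t
  have dG: "(G has_real_derivative t powr (- L - 1) * (t * R' t - L * R t)) (at t)"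
    if "0 < t" for t
  proof -
    have "((\<lambda>t. t powr (- L)) has_real_derivative - L * t powr (- L - 1)) (at t)"
      using has_real_derivative_powr[OF that, of "- L"] by simp
    from DERIV_mult[OF deriv[OF that] this]
    have "(G has_real_derivative R' t * t powr (- L) + R t * (- L * t powr (- L - 1))) (at t)"
      unfolding G_def by (simp only: mult.commute)
    moreover have "R' t * t powr (- L) + R t * (- L * t powr (- L - 1))
        = t powr (- L - 1) * (t * R' t - L * R t)"
      using that by (simp add: powr_diff powr_minus field_simps)
    ultimately show ?thesis by simp
  qed
  have "G 1 \<le> G x"
  proof (rule DERIV_nonneg_imp_increasing_open[OF x])
    fix t assume "1 < t" "t < x"
    then show "\<exists>y. (G has_real_derivative y) (at t) \<and> 0 \<le> y"
      using dG[of t] ge[of t] by (intro exI conjI) auto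
  next
    show "continuous_on {1..x} G"
    proof (rule continuous_at_imp_continuous_on, intro ballI)
      fix t :: real assume "t \<in> {1..x}"
      then show "isCont G t" using DERIV_isCont[OF dG[of t]] by simp
    qed
  qed
  then have "R 1 * x powr L \<le> R x * x powr (- L) * x powr L"
    using x by (intro mult_right_mono) (auto simp: G_def)
  also have "\<dots> = R x" using x by (simp add: powr_minus field_simps)
  finally show ?thesis .
qed

lemma abs_le_powr_split:
  fixes x y L :: real
  assumes L: "1 < L" and y: "0 < y"
  shows "\<bar>x\<bar> \<le> y powr (1 / L) + \<bar>x\<bar> powr L * y powr (1 / L - 1)"
proof (cases "\<bar>x\<bar> \<le> y powr (1 / L)")
  case False
  then have "y powr (1 - 1 / L) = (y powr (1 / L)) powr (L - 1)"
    using L by (simp add: powr_powr field_simps)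
  also have "\<dots> \<le> \<bar>x\<bar> powr (L - 1)"
    using False L by (intro powr_mono2) auto
  finally have "\<bar>x\<bar> * (y powr (1 - 1 / L) * y powr (1 / L - 1))
      \<le> \<bar>x\<bar> * (\<bar>x\<bar> powr (L - 1) * y powr (1 / L - 1))"
    by (intro mult_left_mono mult_right_mono) auto
  also have "\<dots> = \<bar>x\<bar> powr L * y powr (1 / L - 1)"
    using powr_mult_base[OF abs_ge_zero, of x "L - 1"] by simp
  finally have "\<bar>x\<bar> \<le> \<bar>x\<bar> powr L * y powr (1 / L - 1)"
    using y by (simp add: powr_add[symmetric])
  then show ?thesis by (simp add: add_increasing)
qed (simp add: add_increasing2)

lemma real_Suc_powr_le:
  fixes r :: real
  assumes "0 \<le> r" "r \<le> 1" "1 \<le> m"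
  shows "real (Suc m) powr r \<le> 2 * real m powr r"
proof -
  have "real (Suc m) powr r \<le> (2 * real m) powr r"
    using assms by (intro powr_mono2) auto
  also have "\<dots> = 2 powr r * real m powr r"
    by (simp add: powr_mult)
  also have "\<dots> \<le> 2 * real m powr r"
    using powr_mono[of r 1 2] assms by (intro mult_right_mono) auto
  finally show ?thesis .
qed

locale freud_exponent =
  fixes Q :: "real \<Rightarrow> real" and \<Lambda> :: real
  assumes Q_nonneg: "\<And>x. 0 \<le> Q x" and Q_0: "Q 0 = 0"
    and has_deriv_Q: "\<And>x. (Q has_real_derivative deriv Q x) (at x)"
    and continuous_deriv_Q: "continuous_on UNIV (deriv Q)"
    and mono_deriv_Q: "mono (deriv Q)"
    and Q_at_infinity: "filterlim Q at_top at_infinity"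
    and Lambda_gt_1: "1 < \<Lambda>"
    and Lambda_le_T: "\<And>t. t \<noteq> 0 \<Longrightarrow> \<Lambda> \<le> T_fun Q t"
begin

lemma Q_pos: "x \<noteq> 0 \<Longrightarrow> 0 < Q x"
  using Lambda_le_T[of x] Lambda_gt_1 Q_nonneg[of x] by (cases "Q x = 0") (auto simp: T_fun_def)

lemma Lambda_Q_le: "x \<noteq> 0 \<Longrightarrow> \<Lambda> * Q x \<le> x * deriv Q x"
  using Lambda_le_T[of x] Q_pos[of x] by (simp add: T_fun_def pos_le_divide_eq)

lemma x_deriv_Q_nonneg: "0 \<le> x * deriv Q x"
proof (cases "x = 0")
  case False
  then show ?thesis
    using Lambda_Q_le[of x] Q_pos[of x] Lambda_gt_1 by (smt (verit) mult_pos_pos)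
qed simp

lemma deriv_Q_0: "deriv Q 0 = 0"
  by (rule DERIV_local_min[OF has_deriv_Q, of 1]) (auto simp: Q_0 Q_nonneg)

lemma deriv_Q_nonneg: "0 \<le> x \<Longrightarrow> 0 \<le> deriv Q x"
  using mono_deriv_Q deriv_Q_0 by (metis monoD)

lemma deriv_Q_nonpos: "x \<le> 0 \<Longrightarrow> deriv Q x \<le> 0"
  using mono_deriv_Q deriv_Q_0 by (metis monoD)

definition deriv_bound :: real where
  "deriv_bound = max (deriv Q 1) (- deriv Q (-1))"

lemma deriv_bound_nonneg: "0 \<le> deriv_bound"
  using deriv_Q_nonneg[of 1] by (simp add: deriv_bound_def)

lemma abs_deriv_Q_le: "\<bar>deriv Q x\<bar> \<le> deriv_bound + x * deriv Q x"
proof (cases "\<bar>x\<bar> \<le> 1")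
  case True
  then have "deriv Q (-1) \<le> deriv Q x" "deriv Q x \<le> deriv Q 1"
    using mono_deriv_Q by (auto intro: monoD)
  then show ?thesis using x_deriv_Q_nonneg[of x] by (auto simp: deriv_bound_def)
next
  case False
  then have "\<bar>deriv Q x\<bar> \<le> \<bar>x\<bar> * \<bar>deriv Q x\<bar>"
    by (simp add: mult_le_cancel_right1)
  also have "\<dots> = x * deriv Q x"
    using x_deriv_Q_nonneg[of x] by (simp add: abs_mult[symmetric])
  finally show ?thesis using deriv_bound_nonneg by linarith
qed

definition growth_const :: real where
  "growth_const = min (Q 1) (Q (-1))"

lemma growth_const_pos: "0 < growth_const"
  using Q_pos[of 1] Q_pos[of "-1"] by (simp add: growth_const_def)

lemma powr_le_Q:
  assumes "1 \<le> \<bar>x\<bar>"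
  shows "growth_const * \<bar>x\<bar> powr \<Lambda> \<le> Q x"
proof (cases "0 \<le> x")
  case True
  have "Q 1 * x powr \<Lambda> \<le> Q x"
  proof (rule powr_le_of_deriv_ge[where R' = "deriv Q"])
    show "1 \<le> x" using assms True by simp
  qed (use has_deriv_Q Lambda_Q_le in auto)
  moreover have "growth_const * x powr \<Lambda> \<le> Q 1 * x powr \<Lambda>"
    by (intro mult_right_mono) (auto simp: growth_const_def)
  ultimately show ?thesis using True by simp
next
  case False
  have "Q (- 1) * (- x) powr \<Lambda> \<le> Q (- (- x))"
  proof (rule powr_le_of_deriv_ge[where R = "\<lambda>t. Q (- t)" and R' = "\<lambda>t. - deriv Q (- t)"])
    fix t :: real
    show "((\<lambda>t. Q (- t)) has_real_derivative - deriv Q (- t)) (at t)"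
      using DERIV_chain2[OF has_deriv_Q[of "- t"] DERIV_minus[OF DERIV_ident]] by simp
    assume "1 \<le> t"
    then show "\<Lambda> * Q (- t) \<le> t * - deriv Q (- t)" using Lambda_Q_le[of "- t"] by simp
  qed (use assms False in simp)
  moreover have "growth_const * (- x) powr \<Lambda> \<le> Q (- 1) * (- x) powr \<Lambda>"
    by (intro mult_right_mono) (auto simp: growth_const_def)
  ultimately have "growth_const * (- x) powr \<Lambda> \<le> Q x"
    by (metis minus_minus order_trans)
  then show ?thesis using False by simp
qed

lemma linear_le_Q: "growth_const * \<bar>x\<bar> - growth_const \<le> Q x"
proof (cases "1 \<le> \<bar>x\<bar>")
  case True
  then have "\<bar>x\<bar> powr 1 \<le> \<bar>x\<bar> powr \<Lambda>"
    using Lambda_gt_1 by (intro powr_mono) auto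
  then have "growth_const * \<bar>x\<bar> \<le> growth_const * \<bar>x\<bar> powr \<Lambda>"
    using True growth_const_pos by (simp add: mult_left_mono)
  then show ?thesis using powr_le_Q[OF True] growth_const_pos by linarith
next
  case False
  then have "growth_const * \<bar>x\<bar> \<le> growth_const"
    using growth_const_pos by (simp add: mult_left_le)
  then show ?thesis using Q_nonneg[of x] by linarith
qed

lemma powr_Lambda_le: "\<bar>x\<bar> powr \<Lambda> \<le> 1 + x * deriv Q x / (growth_const * \<Lambda>)"
proof (cases "1 \<le> \<bar>x\<bar>")
  case True
  have "growth_const * \<bar>x\<bar> powr \<Lambda> * \<Lambda> \<le> Q x * \<Lambda>"
    using powr_le_Q[OF True] Lambda_gt_1 by (intro mult_right_mono) auto
  also have "\<dots> \<le> x * deriv Q x" using Lambda_Q_le[of x] True by (auto simp: mult.commute)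
  finally have "\<bar>x\<bar> powr \<Lambda> \<le> x * deriv Q x / (growth_const * \<Lambda>)"
    using growth_const_pos Lambda_gt_1 by (simp add: pos_le_divide_eq mult_ac)
  then show ?thesis by linarith
next
  case False
  then have "\<bar>x\<bar> powr \<Lambda> \<le> 1" using Lambda_gt_1 by (intro powr_le1) auto
  moreover have "0 \<le> x * deriv Q x / (growth_const * \<Lambda>)"
    using x_deriv_Q_nonneg[of x] growth_const_pos Lambda_gt_1 by simp
  ultimately show ?thesis by linarith
qed

lemma abs_le_powr_x_deriv_Q:
  assumes "0 < y"
  shows "\<bar>x\<bar> \<le> y powr (1 / \<Lambda>) + y powr (1 / \<Lambda> - 1)
    + y powr (1 / \<Lambda> - 1) / (growth_const * \<Lambda>) * (x * deriv Q x)"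
proof -
  have "\<bar>x\<bar> \<le> y powr (1 / \<Lambda>) + \<bar>x\<bar> powr \<Lambda> * y powr (1 / \<Lambda> - 1)"
    using abs_le_powr_split[OF Lambda_gt_1 assms] .
  also have "\<dots> \<le> y powr (1 / \<Lambda>) + (1 + x * deriv Q x / (growth_const * \<Lambda>)) * y powr (1 / \<Lambda> - 1)"
    by (intro add_left_mono mult_right_mono powr_Lambda_le) simp
  finally show ?thesis by (simp add: algebra_simps)
qed

lemma bounded_poly_exp_Q: "\<exists>M\<ge>0. \<forall>x. \<bar>poly h x\<bar> * exp (- Q x) \<le> M"
proof -
  define c where "c = growth_const"
  define S where "S = (\<Sum>i\<le>degree h. \<bar>coeff h i\<bar> * (real i / c) ^ i)"
  have S: "0 \<le> S" using growth_const_pos by (auto simp: S_def c_def intro!: sum_nonneg)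
  have "\<bar>poly h x\<bar> * exp (- Q x) \<le> S * exp c" for x
  proof -
    have "\<bar>poly h x\<bar> \<le> (\<Sum>i\<le>degree h. \<bar>coeff h i\<bar> * \<bar>x\<bar> ^ i)"
      unfolding poly_altdef by (rule order_trans[OF sum_abs]) (simp add: abs_mult power_abs)
    also have "\<dots> \<le> (\<Sum>i\<le>degree h. \<bar>coeff h i\<bar> * ((real i / c) ^ i * exp (c * \<bar>x\<bar>)))"
      unfolding c_def by (intro sum_mono mult_left_mono power_le_exp_scaled growth_const_pos) auto
    also have "\<dots> = S * exp (c * \<bar>x\<bar>)" by (simp add: S_def sum_distrib_right mult.assoc)
    finally have poly_le: "\<bar>poly h x\<bar> \<le> S * exp (c * \<bar>x\<bar>)" .
    have "exp (- Q x) \<le> exp (c - c * \<bar>x\<bar>)"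
      using linear_le_Q[of x] by (simp add: c_def)
    with poly_le have "\<bar>poly h x\<bar> * exp (- Q x) \<le> S * exp (c * \<bar>x\<bar>) * exp (c - c * \<bar>x\<bar>)"
      by (intro mult_mono) auto
    also have "\<dots> = S * exp c" by (simp add: mult.assoc exp_add[symmetric])
    finally show ?thesis .
  qed
  moreover have "0 \<le> S * exp c" using S by simp
  ultimately show ?thesis by blast
qed

lemma isCont_Q: "isCont Q x"
  using DERIV_isCont[OF has_deriv_Q] .

lemma isCont_deriv_Q: "isCont (deriv Q) x"
  using continuous_deriv_Q by (simp add: continuous_on_eq_continuous_at)

lemma exp_minus_Q_at_top: "((\<lambda>x. exp (- Q x)) \<longlongrightarrow> 0) at_top"
proof -
  have "filterlim Q at_top at_top"
    using filterlim_mono[OF Q_at_infinity order_refl at_top_le_at_infinity] .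
  then show ?thesis
    by (intro filterlim_compose[OF exp_at_bot]) (simp add: filterlim_uminus_at_bot)
qed

lemma exp_minus_Q_at_bot: "((\<lambda>x. exp (- Q x)) \<longlongrightarrow> 0) at_bot"
proof -
  have "filterlim Q at_top at_bot"
    using filterlim_mono[OF Q_at_infinity order_refl at_bot_le_at_infinity] .
  then show ?thesis
    by (intro filterlim_compose[OF exp_at_bot]) (simp add: filterlim_uminus_at_bot)
qed

lemma has_deriv_exp_minus_Q:
  "((\<lambda>x. exp (- Q x)) has_real_derivative - deriv Q x * exp (- Q x)) (at x)"
  using DERIV_chain2[OF DERIV_exp DERIV_minus[OF has_deriv_Q[of x]]] by (simp add: mult.commute)

lemma isCont_deriv_Q_exp: "isCont (\<lambda>x. deriv Q x * exp (- Q x)) x"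
  by (intro continuous_intros isCont_deriv_Q isCont_Q)

text \<open>\<open>-e\<^sup>-\<^sup>Q\<close> is an antiderivative of the integrand, which has constant sign on each half-line.\<close>
lemma set_integrable_deriv_Q_exp_pos:
  "set_integrable lborel (einterval (ereal 0) \<infinity>) (\<lambda>x. deriv Q x * exp (- Q x))"
proof (rule interval_integral_FTC_nonneg[where F = "\<lambda>x. - exp (- Q x)" and A = "- exp (- Q 0)" and B = 0])
  fix x
  show "((\<lambda>x. - exp (- Q x)) has_real_derivative deriv Q x * exp (- Q x)) (at x)"
    using DERIV_minus[OF has_deriv_exp_minus_Q[of x]] by simp
  show "isCont (\<lambda>x. deriv Q x * exp (- Q x)) x" by (rule isCont_deriv_Q_exp)
next
  show "AE x in lborel. ereal 0 < ereal x \<longrightarrow> ereal x < \<infinity> \<longrightarrow> 0 \<le> deriv Q x * exp (- Q x)"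
    using deriv_Q_nonneg by auto
next
  have "isCont (\<lambda>x. - exp (- Q x)) 0" by (intro continuous_intros isCont_Q)
  then have "((\<lambda>x. - exp (- Q x)) \<longlongrightarrow> - exp (- Q 0)) (at_right 0)"
    using continuous_at_imp_continuous_at_within continuous_within by blast
  then show "(((\<lambda>x. - exp (- Q x)) \<circ> real_of_ereal) \<longlongrightarrow> - exp (- Q 0)) (at_right (ereal 0))"
    by (simp add: ereal_tendsto_simps1)
next
  show "(((\<lambda>x. - exp (- Q x)) \<circ> real_of_ereal) \<longlongrightarrow> 0) (at_left \<infinity>)"
    using tendsto_minus[OF exp_minus_Q_at_top] by (simp add: ereal_tendsto_simps1)
qed simp

lemma set_integrable_deriv_Q_exp_neg:
  "set_integrable lborel (einterval (- \<infinity>) (ereal 0)) (\<lambda>x. - (deriv Q x * exp (- Q x)))"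
proof (rule interval_integral_FTC_nonneg[where F = "\<lambda>x. exp (- Q x)" and A = 0 and B = "exp (- Q 0)"])
  fix x
  show "((\<lambda>x. exp (- Q x)) has_real_derivative - (deriv Q x * exp (- Q x))) (at x)"
    using has_deriv_exp_minus_Q[of x] by simp
  show "isCont (\<lambda>x. - (deriv Q x * exp (- Q x))) x" by (intro continuous_intros isCont_deriv_Q_exp)
next
  show "AE x in lborel. - \<infinity> < ereal x \<longrightarrow> ereal x < ereal 0 \<longrightarrow> 0 \<le> - (deriv Q x * exp (- Q x))"
    using deriv_Q_nonpos by (auto simp: mult_nonpos_nonneg)
next
  have "isCont (\<lambda>x. exp (- Q x)) 0" by (intro continuous_intros isCont_Q)
  then have "((\<lambda>x. exp (- Q x)) \<longlongrightarrow> exp (- Q 0)) (at_left 0)"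
    using continuous_at_imp_continuous_at_within continuous_within by blast
  then show "(((\<lambda>x. exp (- Q x)) \<circ> real_of_ereal) \<longlongrightarrow> exp (- Q 0)) (at_left (ereal 0))"
    by (simp add: ereal_tendsto_simps1)
next
  show "(((\<lambda>x. exp (- Q x)) \<circ> real_of_ereal) \<longlongrightarrow> 0) (at_right (- \<infinity>))"
    using exp_minus_Q_at_bot by (simp add: ereal_tendsto_simps1)
qed simp

lemma integrable_abs_deriv_Q_exp: "integrable lborel (\<lambda>x. \<bar>deriv Q x\<bar> * exp (- Q x))"
proof -
  have "integrable lborel (\<lambda>x. indicator {0<..} x * (deriv Q x * exp (- Q x))
      + indicator {..<0} x * (- (deriv Q x * exp (- Q x))))"
    using set_integrable_deriv_Q_exp_pos set_integrable_deriv_Q_exp_neg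
    by (intro Bochner_Integration.integrable_add) (auto simp: set_integrable_def)
  moreover have "\<bar>deriv Q x\<bar> * exp (- Q x) = indicator {0<..} x * (deriv Q x * exp (- Q x))
      + indicator {..<0} x * (- (deriv Q x * exp (- Q x)))" for x
    using deriv_Q_nonneg[of x] deriv_Q_nonpos[of x] deriv_Q_0
    by (cases x "0::real" rule: linorder_cases) (auto simp: indicator_def)
  ultimately show ?thesis by simp
qed

end

section \<open>Bounds on the recurrence coefficients\<close>

locale freud_orthonormal =
  freud_exponent Q \<Lambda> + orthonormal_system "\<lambda>x. (exp (- Q x))\<^sup>2" p
  for Q :: "real \<Rightarrow> real" and \<Lambda> :: real and p :: "nat \<Rightarrow> real poly"
begin

lemma abs_poly_weight_le:
  assumes "\<And>x. \<bar>poly h x\<bar> * exp (- Q x) \<le> M"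
  shows "\<bar>poly h x * (exp (- Q x))\<^sup>2\<bar> \<le> M * exp (- Q x)"
proof -
  have "\<bar>poly h x * (exp (- Q x))\<^sup>2\<bar> = \<bar>poly h x\<bar> * exp (- Q x) * exp (- Q x)"
    by (simp add: abs_mult power2_eq_square)
  also have "\<dots> \<le> M * exp (- Q x)" by (intro mult_right_mono assms) auto
  finally show ?thesis .
qed

lemma integrable_deriv_Q_poly_weight:
  "integrable lborel (\<lambda>x. deriv Q x * poly h x * (exp (- Q x))\<^sup>2)"
proof -
  obtain M where M: "0 \<le> M" "\<And>x. \<bar>poly h x\<bar> * exp (- Q x) \<le> M"
    using bounded_poly_exp_Q by blast
  show ?thesis
  proof (rule Bochner_Integration.integrable_bound)
    show "integrable lborel (\<lambda>x. M * (\<bar>deriv Q x\<bar> * exp (- Q x)))"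
      using integrable_abs_deriv_Q_exp by simp
    have "\<bar>deriv Q x * poly h x * (exp (- Q x))\<^sup>2\<bar> \<le> M * (\<bar>deriv Q x\<bar> * exp (- Q x))" for x
      using mult_left_mono[OF abs_poly_weight_le[OF M(2), of x], of "\<bar>deriv Q x\<bar>"]
      by (simp add: abs_mult mult_ac)
    then show "AE x in lborel. norm (deriv Q x * poly h x * (exp (- Q x))\<^sup>2)
        \<le> norm (M * (\<bar>deriv Q x\<bar> * exp (- Q x)))"
      using M(1) by (intro AE_I2) (simp add: abs_mult)
    have "continuous_on UNIV (\<lambda>x. deriv Q x * poly h x * (exp (- Q x))\<^sup>2)"
      by (intro continuous_at_imp_continuous_on ballI continuous_intros isCont_deriv_Q isCont_Q)
    then show "(\<lambda>x. deriv Q x * poly h x * (exp (- Q x))\<^sup>2) \<in> borel_measurable lborel"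
      using borel_measurable_continuous_onI by simp
  qed
qed

definition wint_deriv_Q :: "real poly \<Rightarrow> real" where
  "wint_deriv_Q h = (LINT x|lborel. deriv Q x * poly h x * (exp (- Q x))\<^sup>2)"

lemma poly_weight_at_top: "((\<lambda>x. poly h x * (exp (- Q x))\<^sup>2) \<longlongrightarrow> 0) at_top"
proof -
  obtain M where "\<And>x. \<bar>poly h x\<bar> * exp (- Q x) \<le> M" using bounded_poly_exp_Q by blast
  then show ?thesis
    using abs_poly_weight_le by (intro Lim_null_comparison[OF always_eventually
          tendsto_mult_right_zero[OF exp_minus_Q_at_top]]) auto
qed

lemma poly_weight_at_bot: "((\<lambda>x. poly h x * (exp (- Q x))\<^sup>2) \<longlongrightarrow> 0) at_bot"
proof -
  obtain M where "\<And>x. \<bar>poly h x\<bar> * exp (- Q x) \<le> M" using bounded_poly_exp_Q by blast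
  then show ?thesis
    using abs_poly_weight_le by (intro Lim_null_comparison[OF always_eventually
          tendsto_mult_right_zero[OF exp_minus_Q_at_bot]]) auto
qed

text \<open>Integration by parts against the weight, whose boundary terms vanish.\<close>
lemma wint_pderiv: "wint (pderiv h) = 2 * wint_deriv_Q h"
proof -
  define f where "f x = poly (pderiv h) x * (exp (- Q x))\<^sup>2
    - 2 * (deriv Q x * poly h x * (exp (- Q x))\<^sup>2)" for x
  have "interval_lebesgue_integral lborel (- \<infinity>) \<infinity> f = 0 - 0"
  proof (rule interval_integral_FTC_integrable[where F = "\<lambda>x. poly h x * (exp (- Q x))\<^sup>2"])
    fix x
    have "((\<lambda>x. poly h x * (exp (- Q x))\<^sup>2) has_real_derivative f x) (at x)"
      unfolding f_def
      by (rule derivative_eq_intros poly_DERIV has_deriv_exp_minus_Q refl | simp)+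
        (simp add: algebra_simps power2_eq_square)
    then show "((\<lambda>x. poly h x * (exp (- Q x))\<^sup>2) has_vector_derivative f x) (at x)"
      by (simp add: has_real_derivative_iff_has_vector_derivative)
    show "isCont f x"
      unfolding f_def by (intro continuous_intros isCont_deriv_Q isCont_Q)
  next
    show "set_integrable lborel (einterval (- \<infinity>) \<infinity>) f"
      unfolding f_def set_integrable_def
      by (simp add: integrable_poly_weight integrable_deriv_Q_poly_weight)
    show "(((\<lambda>x. poly h x * (exp (- Q x))\<^sup>2) \<circ> real_of_ereal) \<longlongrightarrow> 0) (at_right (- \<infinity>))"
      using poly_weight_at_bot by (simp add: ereal_tendsto_simps1)
    show "(((\<lambda>x. poly h x * (exp (- Q x))\<^sup>2) \<circ> real_of_ereal) \<longlongrightarrow> 0) (at_left \<infinity>)"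
      using poly_weight_at_top by (simp add: ereal_tendsto_simps1)
  qed simp
  then have "(LINT x|lborel. f x) = 0"
    by (simp add: interval_lebesgue_integral_def set_lebesgue_integral_def)
  then show ?thesis
    by (simp add: f_def wint_def wint_deriv_Q_def integrable_poly_weight
        integrable_deriv_Q_poly_weight)
qed

lemma wint_deriv_Q_x_p_p: "wint_deriv_Q (pCons 0 (p m * p m)) = real m + 1 / 2"
proof -
  have "pderiv (pCons 0 (p m * p m))
      = p m * p m + pCons 0 (pderiv (p m)) * p m + pCons 0 (pderiv (p m)) * p m"
    by (simp add: pderiv_pCons pderiv_mult mult.commute)
  then have "wint (pderiv (pCons 0 (p m * p m))) = 1 + 2 * real m"
    using wint_x_pderiv_p_p[of m] wint_p_p[of m m]
    by (simp only: wint_add) (simp del: mult_pCons_left)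
  then show ?thesis using wint_pderiv[of "pCons 0 (p m * p m)"] by simp
qed

lemma wint_deriv_Q_p_Suc_p: "wint_deriv_Q (p (Suc m) * p m) = (real m + 1) / (2 * jacobi_a m)"
proof -
  have "wint (pderiv (p m) * p (Suc m)) = 0"
    using degree_pderiv[of "p m"] by (intro wint_orthogonal coeff_eq_0) (auto simp: degree_p)
  moreover have "wint (pderiv (p (Suc m)) * p m) = (real m + 1) / jacobi_a m"
    using degree_pderiv[of "p (Suc m)"] lead_coeff_p_nonzero[of m] lead_coeff_p_nonzero[of "Suc m"]
    by (simp add: wint_mult_p coeff_pderiv degree_p jacobi_a_def)
  ultimately have "wint (pderiv (p (Suc m) * p m)) = (real m + 1) / jacobi_a m"
    by (simp add: pderiv_mult wint_add algebra_simps)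
  then show ?thesis using wint_pderiv[of "p (Suc m) * p m"] by simp
qed

text \<open>The only moment of \<open>Q'\<close> we can compute is \<open>\<integral> x Q' p\<^sub>m\<^sup>2 w = m + 1/2\<close>;
  every other moment is bounded through a pointwise comparison with \<open>x Q'\<close>.\<close>
lemma moment_le_of_le_x_deriv_Q:
  assumes le: "\<And>x. g x \<le> a + b * (x * deriv Q x)"
    and int: "integrable lborel (\<lambda>x. (poly (p m) x)\<^sup>2 * (g x * (exp (- Q x))\<^sup>2))"
  shows "(LINT x|lborel. (poly (p m) x)\<^sup>2 * (g x * (exp (- Q x))\<^sup>2)) \<le> a + b * (real m + 1 / 2)"
proof -
  have "(LINT x|lborel. (poly (p m) x)\<^sup>2 * (g x * (exp (- Q x))\<^sup>2))
      \<le> (LINT x|lborel. a * (poly (p m * p m) x * (exp (- Q x))\<^sup>2)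
        + b * (deriv Q x * poly (pCons 0 (p m * p m)) x * (exp (- Q x))\<^sup>2))"
  proof (rule integral_mono[OF int])
    show "integrable lborel (\<lambda>x. a * (poly (p m * p m) x * (exp (- Q x))\<^sup>2)
        + b * (deriv Q x * poly (pCons 0 (p m * p m)) x * (exp (- Q x))\<^sup>2))"
      by (intro Bochner_Integration.integrable_add integrable_mult_right integrable_poly_weight
          integrable_deriv_Q_poly_weight)
    fix x
    have "(poly (p m) x)\<^sup>2 * (g x * (exp (- Q x))\<^sup>2)
        \<le> (poly (p m) x)\<^sup>2 * ((a + b * (x * deriv Q x)) * (exp (- Q x))\<^sup>2)"
      by (intro mult_left_mono mult_right_mono le) auto
    then show "(poly (p m) x)\<^sup>2 * (g x * (exp (- Q x))\<^sup>2)
        \<le> a * (poly (p m * p m) x * (exp (- Q x))\<^sup>2)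
          + b * (deriv Q x * poly (pCons 0 (p m * p m)) x * (exp (- Q x))\<^sup>2)"
      by (simp add: algebra_simps power2_eq_square)
  qed
  also have "\<dots> = a * wint (p m * p m) + b * wint_deriv_Q (pCons 0 (p m * p m))"
    unfolding wint_def wint_deriv_Q_def
    by (subst Bochner_Integration.integral_add[OF integrable_mult_right[OF integrable_poly_weight]
          integrable_mult_right[OF integrable_deriv_Q_poly_weight]]) simp
  also have "\<dots> = a + b * (real m + 1 / 2)"
    by (simp add: wint_p_p wint_deriv_Q_x_p_p)
  finally show ?thesis .
qed

definition abs_deriv_moment :: "nat \<Rightarrow> real" where
  "abs_deriv_moment m = (LINT x|lborel. (poly (p m) x)\<^sup>2 * (\<bar>deriv Q x\<bar> * (exp (- Q x))\<^sup>2))"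

lemma integrable_abs_deriv_moment:
  "integrable lborel (\<lambda>x. (poly (p m) x)\<^sup>2 * (\<bar>deriv Q x\<bar> * (exp (- Q x))\<^sup>2))"
proof -
  have "\<bar>deriv Q x * poly (p m * p m) x * (exp (- Q x))\<^sup>2\<bar>
      = (poly (p m) x)\<^sup>2 * (\<bar>deriv Q x\<bar> * (exp (- Q x))\<^sup>2)" for x
    by (simp add: abs_mult power2_eq_square mult_ac)
  then show ?thesis
    using integrable_abs[OF integrable_deriv_Q_poly_weight[of "p m * p m"]] by simp
qed

lemma abs_deriv_moment_le: "abs_deriv_moment m \<le> deriv_bound + real m + 1 / 2"
  using moment_le_of_le_x_deriv_Q[of "\<lambda>x. \<bar>deriv Q x\<bar>" deriv_bound 1 m]
    abs_deriv_Q_le integrable_abs_deriv_moment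
  by (simp add: abs_deriv_moment_def)

text \<open>The Freud equation \<open>(m+1)/(2 a\<^sub>m) = \<integral> Q' p\<^sub>m\<^sub>+\<^sub>1 p\<^sub>m w\<close> bounds \<open>1/a\<^sub>m\<close> by the \<open>|Q'|\<close>-moments.\<close>
lemma jacobi_a_ge: "1 / (2 * (deriv_bound + 1)) \<le> jacobi_a m"
proof -
  have "(real m + 1) / (2 * jacobi_a m)
      \<le> (abs_deriv_moment (Suc m) + abs_deriv_moment m) / 2"
    using abs_integral_le_half_sq_sum[OF integrable_deriv_Q_poly_weight
        integrable_abs_deriv_moment integrable_abs_deriv_moment, of "p (Suc m) * p m" "Suc m" m]
    by (simp add: wint_deriv_Q_p_Suc_p[symmetric] wint_deriv_Q_def abs_deriv_moment_def
        abs_mult mult_ac)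
  also have "\<dots> \<le> deriv_bound + real m + 1"
    using abs_deriv_moment_le[of m] abs_deriv_moment_le[of "Suc m"] by simp
  finally have "real m + 1 \<le> (deriv_bound + real m + 1) * (2 * jacobi_a m)"
    using jacobi_a_pos[of m] by (simp add: divide_le_eq)
  then have "(real m + 1) / (2 * (deriv_bound + real m + 1)) \<le> jacobi_a m"
    using deriv_bound_nonneg by (simp add: divide_le_eq algebra_simps)
  moreover have "1 / (2 * (deriv_bound + 1)) \<le> (real m + 1) / (2 * (deriv_bound + real m + 1))"
    using deriv_bound_nonneg by (simp add: divide_le_eq field_simps)
  ultimately show ?thesis by linarith
qed

lemma abs_moment_le:
  assumes m: "1 \<le> m"
  shows "abs_moment m \<le> (2 + 2 / (growth_const * \<Lambda>)) * real m powr (1 / \<Lambda>)"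
proof -
  define y where "y = real m"
  define c where "c = growth_const * \<Lambda>"
  have y: "1 \<le> y" and c: "0 < c"
    using m growth_const_pos Lambda_gt_1 by (simp_all add: y_def c_def)
  have "abs_moment m \<le> y powr (1 / \<Lambda>) + y powr (1 / \<Lambda> - 1)
      + y powr (1 / \<Lambda> - 1) / c * (y + 1 / 2)"
    unfolding abs_moment_def y_def c_def
    using abs_le_powr_x_deriv_Q m by (intro moment_le_of_le_x_deriv_Q integrable_abs_moment) simp
  also have "\<dots> = y powr (1 / \<Lambda>) + y powr (1 / \<Lambda> - 1) * (1 + (y + 1 / 2) / c)"
    by (simp add: algebra_simps)
  also have "\<dots> \<le> y powr (1 / \<Lambda>) + y powr (1 / \<Lambda> - 1) * (y * (1 + 2 / c))"
  proof -
    have "(y + 1 / 2) / c \<le> 2 * y / c" using y c by (intro divide_right_mono) auto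
    then have "1 + (y + 1 / 2) / c \<le> y * (1 + 2 / c)" using y by (simp add: algebra_simps)
    then show ?thesis by (intro add_left_mono mult_left_mono) auto
  qed
  also have "\<dots> = (2 + 2 / c) * y powr (1 / \<Lambda>)"
    using powr_mult_base[of y "1 / \<Lambda> - 1"] y by (simp add: algebra_simps)
  finally show ?thesis by (simp add: c_def y_def)
qed

lemma jacobi_coeffs_le_powr:
  "\<exists>C>0. \<forall>m\<ge>1. jacobi_a m \<le> C * real m powr (1 / \<Lambda>) \<and> \<bar>jacobi_b m\<bar> \<le> C * real m powr (1 / \<Lambda>)"
proof -
  define D where "D = 2 + 2 / (growth_const * \<Lambda>)"
  have D: "0 < D" using growth_const_pos Lambda_gt_1 by (simp add: D_def add_pos_nonneg)
  have "jacobi_a m \<le> 2 * D * real m powr (1 / \<Lambda>) \<and> \<bar>jacobi_b m\<bar> \<le> 2 * D * real m powr (1 / \<Lambda>)"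
    if m: "1 \<le> m" for m
  proof -
    have "abs_moment (Suc m) \<le> D * real (Suc m) powr (1 / \<Lambda>)"
      using abs_moment_le[of "Suc m"] by (simp add: D_def)
    also have "\<dots> \<le> D * (2 * real m powr (1 / \<Lambda>))"
      using real_Suc_powr_le[of "1 / \<Lambda>" m] Lambda_gt_1 m D by (intro mult_left_mono) auto
    finally have "abs_moment (Suc m) \<le> 2 * (D * real m powr (1 / \<Lambda>))" by simp
    moreover have "abs_moment m \<le> D * real m powr (1 / \<Lambda>)"
      using abs_moment_le[OF m] by (simp add: D_def)
    moreover have "0 \<le> D * real m powr (1 / \<Lambda>)" using D by simp
    ultimately show ?thesis
      using jacobi_a_le_abs_moment[of m] abs_jacobi_b_le[of m] by (simp add: mult.assoc)
  qed
  with D show ?thesis by (intro exI[of _ "2 * D"]) auto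
qed

end

lemma class_FC2_imp_freud_exponent:
  assumes "class_FC2 Q"
  shows "\<exists>\<Lambda>. freud_exponent Q \<Lambda>"
proof -
  from assms obtain \<Lambda> where "1 < \<Lambda>" "\<And>t. t \<noteq> 0 \<Longrightarrow> \<Lambda> \<le> T_fun Q t"
    unfolding class_FC2_def by blast
  with assms have "freud_exponent Q \<Lambda>"
    by unfold_locales (auto simp: class_FC2_def DERIV_deriv_iff_real_differentiable)
  then show ?thesis ..
qed

lemma orthonormal_polys_imp_orthonormal_system:
  assumes "orthonormal_polys Q p"
  shows "orthonormal_system (\<lambda>x. (exp (- Q x))\<^sup>2) p"
proof -
  have deg: "degree (p m) = m" and lc: "0 < lead_coeff (p m)"
    and int: "integrable lborel (\<lambda>x. poly (p m) x * poly (p n) x * (exp (- Q x))\<^sup>2)"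
    and orth: "(LINT x|lborel. poly (p m) x * poly (p n) x * (exp (- Q x))\<^sup>2)
      = (if m = n then 1 else 0)" for m n
    using assms unfolding orthonormal_polys_def by blast+
  show ?thesis by unfold_locales (rule deg lc int orth | simp)+
qed

theorem lemma7p3:
  fixes Q :: "real \<Rightarrow> real" and p :: "nat \<Rightarrow> real poly"
  assumes "class_FC2 Q"
    and "orthonormal_polys Q p"
  shows "\<exists>A B :: nat \<Rightarrow> real.
           (\<forall>m. A m > 0) \<and>
           (\<forall>m x. x * poly (p m) x =
                  A m * poly (p (Suc m)) x + B m * poly (p m) x
                  + (if m = 0 then 0 else A (m - 1) * poly (p (m - 1)) x)) \<and>
           (\<exists>r C1 C2. 0 < r \<and> r < 1 \<and> 0 < C1 \<and> 0 < C2 \<and>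
              (\<forall>m\<ge>1. C1 \<le> A m \<and> A m \<le> C2 * real m powr r \<and>
                      \<bar>B m\<bar> \<le> C2 * real m powr r))"
proof -
  obtain \<Lambda> where "freud_exponent Q \<Lambda>"
    using class_FC2_imp_freud_exponent[OF assms(1)] by blast
  then interpret freud_orthonormal Q \<Lambda> p
    using orthonormal_polys_imp_orthonormal_system[OF assms(2)]
    by (simp add: freud_orthonormal_def)
  obtain C2 where "0 < C2"
    and upper: "\<And>m. 1 \<le> m \<Longrightarrow> jacobi_a m \<le> C2 * real m powr (1 / \<Lambda>)
        \<and> \<bar>jacobi_b m\<bar> \<le> C2 * real m powr (1 / \<Lambda>)"
    using jacobi_coeffs_le_powr by blast
  show ?thesis
    using jacobi_a_pos poly_three_term_recurrence jacobi_a_ge upper \<open>0 < C2\<close>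
      Lambda_gt_1 deriv_bound_nonneg
    by (intro exI[of _ jacobi_a] exI[of _ jacobi_b] exI[of _ "1 / \<Lambda>"]
        exI[of _ "1 / (2 * (deriv_bound + 1))"] exI[of _ C2] conjI allI impI) auto
qed

end
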